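(* Let $\tau > 0$ and $\lambda > 0$ be constants. Then the function $$c(x,y,d) \triangleq \log\left(1 + \left[\left(\frac{1}{1+x}\right)\left(\frac{1}{y}\right) + \tau\right]\frac{1}{d^{\lambda}}\right)$$ is convex on the set $\{(x,y,d) \in \mathbb{R}^3 : x > -1,\ y > 0,\ d > 0\}$.
   Context: $\log$ denotes the natural logarithm. *)

theory Defs
  imports "HOL-Analysis.Analysis"
begin

definition cfun :: "real \<Rightarrow> real \<Rightarrow> real \<times> real \<times> real \<Rightarrow> real" where
  "cfun tau lam p = (case p of (x, y, d) \<Rightarrow>
     ln (1 + ((1 / (1 + x)) * (1 / y) + tau) * (1 / d powr lam)))"

definition cdomain :: "(real \<times> real \<times> real) set" where
  "cdomain = {(x, y, d). x > -1 \<and> y > 0 \<and> d > 0}"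

end

theory Submission
  imports Defs
begin

text \<open>Write the argument of the logarithm as \<open>1 + (X Y + \<tau>) D\<close> with \<open>X = 1/(1+x)\<close>,
  \<open>Y = 1/y\<close> and \<open>D = d powr -\<lambda>\<close>. Each of \<open>X\<close>, \<open>Y\<close>, \<open>D\<close> is log-convex, being a
  nonnegative power of the reciprocal of an affine function. Log-convexity is preserved by
  products (logarithms add) and by sums (by Hoelder's inequality), and positive constants are
  log-convex; hence the argument is log-convex, which means precisely that \<open>c\<close> is convex.\<close>

lemma convex_on_cong:
  assumes "\<And>x. x \<in> S \<Longrightarrow> f x = g x"
  shows "convex_on S f \<longleftrightarrow> convex_on S g"
  using assms by (auto simp: convex_on_def convexD)

lemma convex_on_compose_affine:
  assumes f: "convex_on T f" and "convex S" and hS: "h ` S \<subseteq> T"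
    and h: "\<And>x y t. x \<in> S \<Longrightarrow> y \<in> S \<Longrightarrow> 0 \<le> t \<Longrightarrow> t \<le> 1 \<Longrightarrow>
      h ((1 - t) *\<^sub>R x + t *\<^sub>R y) = (1 - t) *\<^sub>R h x + t *\<^sub>R h y"
  shows "convex_on S (\<lambda>x. f (h x))"
proof (rule convex_onI)
  fix t :: real and x y assume "0 < t" "t < 1" "x \<in> S" "y \<in> S"
  then have "h ((1 - t) *\<^sub>R x + t *\<^sub>R y) = (1 - t) *\<^sub>R h x + t *\<^sub>R h y"
    by (intro h) auto
  with \<open>0 < t\<close> \<open>t < 1\<close> \<open>x \<in> S\<close> \<open>y \<in> S\<close> hS
  show "f (h ((1 - t) *\<^sub>R x + t *\<^sub>R y)) \<le> (1 - t) * f (h x) + t * f (h y)"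
    using convex_onD[OF f, of t "h x" "h y"] by auto
qed fact

text \<open>Hoelder's inequality for two summands: Young's inequality applied to the terms
  normalised by \<open>a1 + b1\<close> and \<open>a2 + b2\<close> sums to at most \<open>s + t = 1\<close>.\<close>

lemma geometric_mean_superadditive:
  fixes a1 a2 b1 b2 s t :: real
  assumes "0 < a1" "0 < a2" "0 < b1" "0 < b2" "0 \<le> s" "0 \<le> t" "s + t = 1"
  shows "a1 powr s * a2 powr t + b1 powr s * b2 powr t \<le> (a1 + b1) powr s * (a2 + b2) powr t"
proof -
  define A B where "A = a1 + b1" and "B = a2 + b2"
  have "A > 0" "B > 0" using assms by (simp_all add: A_def B_def)
  have "(a1 / A) powr s * (a2 / B) powr t + (b1 / A) powr s * (b2 / B) powr t
      \<le> (s * (a1 / A) + t * (a2 / B)) + (s * (b1 / A) + t * (b2 / B))"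
    using assms \<open>A > 0\<close> \<open>B > 0\<close>
    by (intro add_mono Youngs_inequality_0) simp_all
  also have "\<dots> = s * ((a1 + b1) / A) + t * ((a2 + b2) / B)"
    by (simp add: add_divide_distrib algebra_simps)
  also have "\<dots> = s + t"
    using \<open>A > 0\<close> \<open>B > 0\<close> by (simp add: A_def B_def)
  finally have "(a1 powr s * a2 powr t + b1 powr s * b2 powr t) / (A powr s * B powr t) \<le> 1"
    using assms \<open>A > 0\<close> \<open>B > 0\<close> by (simp add: powr_divide add_divide_distrib)
  then show ?thesis
    using \<open>A > 0\<close> \<open>B > 0\<close> by (simp add: A_def B_def)
qed

definition log_convex_on :: "'a::real_vector set \<Rightarrow> ('a \<Rightarrow> real) \<Rightarrow> bool" where
  "log_convex_on S f \<longleftrightarrow> (\<forall>x\<in>S. 0 < f x) \<and> convex_on S (\<lambda>x. ln (f x))"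

lemma log_convex_onI:
  assumes "convex S" and pos: "\<And>x. x \<in> S \<Longrightarrow> 0 < f x"
    and le: "\<And>x y t. x \<in> S \<Longrightarrow> y \<in> S \<Longrightarrow> 0 < t \<Longrightarrow> t < 1 \<Longrightarrow>
      f ((1 - t) *\<^sub>R x + t *\<^sub>R y) \<le> f x powr (1 - t) * f y powr t"
  shows "log_convex_on S f"
  unfolding log_convex_on_def
proof (intro conjI ballI convex_onI)
  fix t :: real and x y assume t: "0 < t" "t < 1" and xy: "x \<in> S" "y \<in> S"
  then have "(1 - t) *\<^sub>R x + t *\<^sub>R y \<in> S"
    using \<open>convex S\<close> by (simp add: convexD_alt)
  then have "ln (f ((1 - t) *\<^sub>R x + t *\<^sub>R y)) \<le> ln (f x powr (1 - t) * f y powr t)"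
    using le[OF xy t] pos xy by (simp add: ln_mono)
  also have "\<dots> = (1 - t) * ln (f x) + t * ln (f y)"
    using pos[OF xy(1)] pos[OF xy(2)] by (simp add: ln_mult ln_powr)
  finally show "ln (f ((1 - t) *\<^sub>R x + t *\<^sub>R y)) \<le> (1 - t) * ln (f x) + t * ln (f y)" .
qed (use assms in auto)

lemma log_convex_onD:
  fixes t :: real
  assumes "log_convex_on S f" "x \<in> S" "y \<in> S" "0 \<le> t" "t \<le> 1"
  shows "f ((1 - t) *\<^sub>R x + t *\<^sub>R y) \<le> f x powr (1 - t) * f y powr t"
proof -
  have pos: "\<forall>x\<in>S. 0 < f x" and cvx: "convex_on S (\<lambda>x. ln (f x))"
    using assms(1) by (auto simp: log_convex_on_def)
  have fx: "f x > 0" and fy: "f y > 0"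
    using pos assms(2,3) by auto
  have "(1 - t) *\<^sub>R x + t *\<^sub>R y \<in> S"
    using assms convex_on_imp_convex[OF cvx] by (simp add: convexD_alt)
  then have "f ((1 - t) *\<^sub>R x + t *\<^sub>R y) = exp (ln (f ((1 - t) *\<^sub>R x + t *\<^sub>R y)))"
    using pos by simp
  also have "\<dots> \<le> exp ((1 - t) * ln (f x) + t * ln (f y))"
    using convex_onD[OF cvx] assms by simp
  also have "\<dots> = f x powr (1 - t) * f y powr t"
    using fx fy by (simp add: powr_def exp_add mult.commute)
  finally show ?thesis .
qed

lemma log_convex_on_cong:
  assumes "\<And>x. x \<in> S \<Longrightarrow> f x = g x"
  shows "log_convex_on S f \<longleftrightarrow> log_convex_on S g"
  using assms convex_on_cong[of S "\<lambda>x. ln (f x)" "\<lambda>x. ln (g x)"]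
  by (simp add: log_convex_on_def)

lemma log_convex_on_const:
  "0 < c \<Longrightarrow> convex S \<Longrightarrow> log_convex_on S (\<lambda>x. c)"
  by (simp add: log_convex_on_def convex_on_const)

lemma log_convex_on_mult:
  assumes "log_convex_on S f" "log_convex_on S g"
  shows "log_convex_on S (\<lambda>x. f x * g x)"
proof -
  have pos: "0 < f x" "0 < g x" if "x \<in> S" for x
    using assms that by (auto simp: log_convex_on_def)
  have "convex_on S (\<lambda>x. ln (f x) + ln (g x))"
    using assms by (auto simp: log_convex_on_def)
  moreover have "ln (f x * g x) = ln (f x) + ln (g x)" if "x \<in> S" for x
    using pos[OF that] by (simp add: ln_mult)
  ultimately show ?thesis
    using pos convex_on_cong[of S "\<lambda>x. ln (f x * g x)"] by (simp add: log_convex_on_def)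
qed

lemma log_convex_on_add:
  assumes f: "log_convex_on S f" and g: "log_convex_on S g"
  shows "log_convex_on S (\<lambda>x. f x + g x)"
proof (rule log_convex_onI)
  show "convex S"
    using f convex_on_imp_convex by (auto simp: log_convex_on_def)
  have pos: "\<And>x. x \<in> S \<Longrightarrow> 0 < f x \<and> 0 < g x"
    using f g by (simp add: log_convex_on_def)
  then show "\<And>x. x \<in> S \<Longrightarrow> 0 < f x + g x"
    by (simp add: add_pos_pos)
  fix x y and t :: real assume xy: "x \<in> S" "y \<in> S" and t: "0 < t" "t < 1"
  have "f ((1 - t) *\<^sub>R x + t *\<^sub>R y) + g ((1 - t) *\<^sub>R x + t *\<^sub>R y)
      \<le> f x powr (1 - t) * f y powr t + g x powr (1 - t) * g y powr t"
    using xy t by (intro add_mono log_convex_onD[OF f] log_convex_onD[OF g]) auto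
  also have "\<dots> \<le> (f x + g x) powr (1 - t) * (f y + g y) powr t"
    using xy t pos by (intro geometric_mean_superadditive) auto
  finally show "f ((1 - t) *\<^sub>R x + t *\<^sub>R y) + g ((1 - t) *\<^sub>R x + t *\<^sub>R y)
      \<le> (f x + g x) powr (1 - t) * (f y + g y) powr t" .
qed

lemma log_convex_on_compose_affine:
  assumes "log_convex_on T f" "convex S" "h ` S \<subseteq> T"
    and "\<And>x y t. x \<in> S \<Longrightarrow> y \<in> S \<Longrightarrow> 0 \<le> t \<Longrightarrow> t \<le> 1 \<Longrightarrow>
      h ((1 - t) *\<^sub>R x + t *\<^sub>R y) = (1 - t) *\<^sub>R h x + t *\<^sub>R h y"
  shows "log_convex_on S (\<lambda>x. f (h x))"
  using assms convex_on_compose_affine[of T "\<lambda>x. ln (f x)" S h]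
  by (auto simp: log_convex_on_def)

lemma log_convex_on_inverse_powr:
  assumes "0 \<le> a"
  shows "log_convex_on {0<..} (\<lambda>u::real. 1 / u powr a)"
proof -
  have "convex_on {0<..} (\<lambda>u. a * - ln u)"
    using assms ln_concave by (intro convex_on_cmul) (simp_all add: concave_on_def)
  then show ?thesis
    using convex_on_cong[of "{0<..}" "\<lambda>u. ln (1 / u powr a)" "\<lambda>u. a * - ln u"]
    by (simp add: log_convex_on_def ln_div ln_powr)
qed

lemma log_convex_on_inverse: "log_convex_on {0<..} (\<lambda>u::real. 1 / u)"
  using log_convex_on_inverse_powr[of 1] log_convex_on_cong[of "{0<..}" "\<lambda>u::real. 1 / u powr 1"]
  by simp

theorem proposition1:
  fixes tau lam :: real
  assumes "tau > 0" and "lam > 0"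
  shows "convex_on cdomain (cfun tau lam)"
proof -
  have "cdomain = {-1<..} \<times> {0<..} \<times> {0<..}"
    by (auto simp: cdomain_def)
  then have "convex cdomain"
    by (metis convex_Times convex_real_interval(3))
  have X: "log_convex_on cdomain (\<lambda>p. 1 / (1 + fst p))"
    by (rule log_convex_on_compose_affine[OF log_convex_on_inverse \<open>convex cdomain\<close>])
      (auto simp: cdomain_def algebra_simps)
  have Y: "log_convex_on cdomain (\<lambda>p. 1 / fst (snd p))"
    by (rule log_convex_on_compose_affine[OF log_convex_on_inverse \<open>convex cdomain\<close>])
      (auto simp: cdomain_def)
  have D: "log_convex_on cdomain (\<lambda>p. 1 / snd (snd p) powr lam)"
    using \<open>lam > 0\<close>
    by (intro log_convex_on_compose_affine[OF log_convex_on_inverse_powr \<open>convex cdomain\<close>])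
      (auto simp: cdomain_def)
  have "log_convex_on cdomain
      (\<lambda>p. 1 + ((1 / (1 + fst p)) * (1 / fst (snd p)) + tau) * (1 / snd (snd p) powr lam))"
    using \<open>tau > 0\<close> \<open>convex cdomain\<close>
    by (intro log_convex_on_add log_convex_on_mult log_convex_on_const X Y D) auto
  moreover have "cfun tau lam =
      (\<lambda>p. ln (1 + ((1 / (1 + fst p)) * (1 / fst (snd p)) + tau) * (1 / snd (snd p) powr lam)))"
    by (simp add: cfun_def fun_eq_iff split: prod.split)
  ultimately show ?thesis
    by (simp add: log_convex_on_def)
qed

end
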